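(* Let $A$ be a complex semisimple Banach algebra with a unit. Then $\mathrm{Soc}(A)$ is finite-dimensional if and only if the norm closure of $\mathrm{Soc}(A)$ in $A$ has an identity element. *)

theory Defs
  imports "HOL-Analysis.Analysis"
begin

class cbanach_algebra_1 = real_normed_algebra_1 + banach +
  fixes scaleC :: "complex \<Rightarrow> 'a \<Rightarrow> 'a"
  assumes scaleC_add_right: "scaleC c (x + y) = scaleC c x + scaleC c y"
    and scaleC_add_left: "scaleC (c + d) x = scaleC c x + scaleC d x"
    and scaleC_scaleC: "scaleC c (scaleC d x) = scaleC (c * d) x"
    and scaleC_one: "scaleC 1 x = x"
    and scaleC_of_real: "scaleC (complex_of_real r) x = scaleR r x"
    and norm_scaleC: "norm (scaleC c x) = cmod c * norm x"
    and mult_scaleC_left: "scaleC c x * y = scaleC c (x * y)"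
    and mult_scaleC_right: "x * scaleC c y = scaleC c (x * y)"

definition cspan :: "'a::cbanach_algebra_1 set \<Rightarrow> 'a set" where
  "cspan S = {x. \<exists>T c. finite T \<and> T \<subseteq> S \<and> x = (\<Sum>t\<in>T. scaleC (c t) t)}"

definition csubspace :: "'a::cbanach_algebra_1 set \<Rightarrow> bool" where
  "csubspace L \<longleftrightarrow> 0 \<in> L \<and> (\<forall>x\<in>L. \<forall>y\<in>L. x + y \<in> L) \<and> (\<forall>c. \<forall>x\<in>L. scaleC c x \<in> L)"

definition left_ideal :: "'a::cbanach_algebra_1 set \<Rightarrow> bool" where
  "left_ideal L \<longleftrightarrow> csubspace L \<and> (\<forall>a. \<forall>x\<in>L. a * x \<in> L)"

definition maximal_left_ideal :: "'a::cbanach_algebra_1 set \<Rightarrow> bool" where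
  "maximal_left_ideal L \<longleftrightarrow> left_ideal L \<and> L \<noteq> UNIV \<and>
     (\<forall>J. left_ideal J \<and> L \<subseteq> J \<and> J \<noteq> UNIV \<longrightarrow> J = L)"

definition minimal_left_ideal :: "'a::cbanach_algebra_1 set \<Rightarrow> bool" where
  "minimal_left_ideal L \<longleftrightarrow> left_ideal L \<and> L \<noteq> {0} \<and>
     (\<forall>J. left_ideal J \<and> J \<subseteq> L \<and> J \<noteq> {0} \<longrightarrow> J = L)"

definition jacobson_radical :: "'a::cbanach_algebra_1 set" where
  "jacobson_radical = \<Inter> {L. maximal_left_ideal L}"

definition semisimple :: "'a::cbanach_algebra_1 itself \<Rightarrow> bool" where
  "semisimple _ \<longleftrightarrow> (jacobson_radical :: 'a set) = {0}"

text \<open>Socle: the sum of all minimal left ideals ({0} if there are none).\<close>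
definition socle :: "'a::cbanach_algebra_1 set" where
  "socle = cspan (\<Union> {L. minimal_left_ideal L})"

definition cfinite_dim :: "'a::cbanach_algebra_1 set \<Rightarrow> bool" where
  "cfinite_dim S \<longleftrightarrow> (\<exists>B. finite B \<and> S \<subseteq> cspan B)"

definition has_identity :: "'a::cbanach_algebra_1 set \<Rightarrow> bool" where
  "has_identity S \<longleftrightarrow> (\<exists>e\<in>S. \<forall>x\<in>S. e * x = x \<and> x * e = x)"

end

theory Submission
  imports Defs "HOL-Complex_Analysis.Cauchy_Integral_Formula"
begin

text \<open>
  Write \<open>S\<close> for the socle. If \<open>S\<close> is finite dimensional, choose an idempotent \<open>e \<in> S\<close> for which
  the (real) dimension of \<open>S e\<close> is maximal. If \<open>e\<close> were not a right identity of \<open>S\<close>, some minimal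
  left ideal \<open>L\<close> would satisfy \<open>L (1 - e) \<noteq> 0\<close>; the idempotent \<open>q\<close> generating the minimal left
  ideal \<open>L (1 - e)\<close> has \<open>q e = 0\<close>, so \<open>f = e + q - e q\<close> is an idempotent of \<open>S\<close> with
  \<open>S e \<subset> S f\<close>. Thus \<open>e\<close> is a right identity of \<open>S\<close>, and also a left one, because for \<open>s \<in> S\<close> the
  left ideal generated by \<open>s - e s\<close> has zero square and semisimplicity kills it. By continuity of
  multiplication \<open>e\<close> remains an identity of the closure of \<open>S\<close>.

  Conversely, let \<open>e\<close> be the identity of the closure of \<open>S\<close>. For \<open>s \<in> S\<close> with \<open>\<parallel>e - s\<parallel> < 1\<close> the
  element \<open>1 - (e - s)\<close> is invertible and \<open>(1 - (e - s)) e = s\<close>, so \<open>e \<in> S\<close>. Write \<open>e\<close> as a finite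
  combination of elements \<open>t\<^sub>i\<close> of minimal left ideals; every \<open>x \<in> S\<close> equals \<open>e x e\<close>, a combination of
  the \<open>t\<^sub>i x t\<^sub>j\<close>. For a minimal idempotent \<open>p\<close> the corner \<open>p A p\<close> is a complex normed division
  algebra, hence equal to \<open>\<complex> p\<close> by Gelfand-Mazur (Liouville's theorem applied through a Hahn-Banach
  functional), and it follows that each \<open>t\<^sub>i A t\<^sub>j\<close> spans at most one dimension.
\<close>

section \<open>Complex scalars, subspaces and spans\<close>

lemma scaleC_zero_left [simp]: "scaleC 0 (x::'a::cbanach_algebra_1) = 0"
  using scaleC_of_real[of 0 x] by simp

lemma scaleC_zero_right [simp]: "scaleC c (0::'a::cbanach_algebra_1) = 0"
  using scaleC_add_right[of c 0 0] by simp

lemma scaleC_minus_one: "scaleC (-1) (x::'a::cbanach_algebra_1) = - x"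
  using scaleC_of_real[of "-1" x] by simp

lemma scaleC_diff_left: "scaleC (c - d) (x::'a::cbanach_algebra_1) = scaleC c x - scaleC d x"
  using scaleC_add_left[of "c - d" d x] by (simp add: eq_diff_eq)

lemma scaleC_Re_Im: "scaleC c (x::'a::cbanach_algebra_1) = Re c *\<^sub>R x + Im c *\<^sub>R scaleC \<i> x"
proof -
  have "scaleC c x = scaleC (complex_of_real (Re c) + complex_of_real (Im c) * \<i>) x"
    by (rule arg_cong[where f="\<lambda>c. scaleC c x"]) (simp add: complex_eq_iff)
  also have "\<dots> = Re c *\<^sub>R x + Im c *\<^sub>R scaleC \<i> x"
    by (simp add: scaleC_add_left scaleC_of_real scaleC_scaleC[symmetric])
  finally show ?thesis .
qed

lemma scaleC_sum_right:
  "scaleC c (\<Sum>t\<in>T. f t) = (\<Sum>t\<in>T. scaleC c (f t::'a::cbanach_algebra_1))"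
  by (induct T rule: infinite_finite_induct) (auto simp: scaleC_add_right)

lemma csubspace_0: "csubspace L \<Longrightarrow> 0 \<in> L"
  by (simp add: csubspace_def)

lemma csubspace_add: "csubspace L \<Longrightarrow> x \<in> L \<Longrightarrow> y \<in> L \<Longrightarrow> x + y \<in> L"
  by (simp add: csubspace_def)

lemma csubspace_scaleC: "csubspace L \<Longrightarrow> x \<in> L \<Longrightarrow> scaleC c x \<in> L"
  by (simp add: csubspace_def)

lemma csubspace_diff: "csubspace L \<Longrightarrow> x \<in> L \<Longrightarrow> y \<in> L \<Longrightarrow> x - y \<in> L"
  by (metis csubspace_add csubspace_scaleC scaleC_minus_one diff_conv_add_uminus)

lemma csubspace_sum: "csubspace L \<Longrightarrow> (\<And>t. t \<in> T \<Longrightarrow> f t \<in> L) \<Longrightarrow> sum f T \<in> L"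
  by (induct T rule: infinite_finite_induct) (auto simp: csubspace_0 csubspace_add)

lemma csubspace_imp_subspace: "csubspace L \<Longrightarrow> subspace L"
  unfolding subspace_def by (metis csubspace_0 csubspace_add csubspace_scaleC scaleC_of_real)

lemma cspan_base: "x \<in> X \<Longrightarrow> x \<in> cspan X"
  unfolding cspan_def by (intro CollectI exI[of _ "{x}"] exI[of _ "\<lambda>_. 1"]) (simp add: scaleC_one)

lemma cspan_minimal: "csubspace L \<Longrightarrow> X \<subseteq> L \<Longrightarrow> cspan X \<subseteq> L"
  unfolding cspan_def by (auto intro!: csubspace_sum csubspace_scaleC)

lemma csubspace_cspan: "csubspace (cspan X)"
  unfolding csubspace_def
proof (intro conjI ballI allI)
  show "0 \<in> cspan X"
    unfolding cspan_def by (intro CollectI exI[of _ "{}"]) simp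
next
  fix x y assume "x \<in> cspan X" "y \<in> cspan X"
  then obtain T1 c1 T2 c2 where 1: "finite T1" "T1 \<subseteq> X" "x = (\<Sum>t\<in>T1. scaleC (c1 t) t)"
    and 2: "finite T2" "T2 \<subseteq> X" "y = (\<Sum>t\<in>T2. scaleC (c2 t) t)"
    unfolding cspan_def by blast
  have restrict: "(\<Sum>t\<in>T1 \<union> T2. scaleC (if t \<in> T then c t else 0) t) = (\<Sum>t\<in>T. scaleC (c t) t)"
    if "T \<subseteq> T1 \<union> T2" for T c
    by (rule sum.mono_neutral_cong_right) (use 1 2 that in auto)
  define c where "c t = (if t \<in> T1 then c1 t else 0) + (if t \<in> T2 then c2 t else 0)" for t
  have "x + y = (\<Sum>t\<in>T1 \<union> T2. scaleC (c t) t)"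
    unfolding c_def scaleC_add_left sum.distrib
    using restrict[of T1 c1] restrict[of T2 c2] 1(3) 2(3) by simp
  then show "x + y \<in> cspan X"
    unfolding cspan_def using 1 2 by (intro CollectI exI[of _ "T1 \<union> T2"] exI[of _ c]) simp
next
  fix d x assume "x \<in> cspan X"
  then obtain T c where "finite T" "T \<subseteq> X" "x = (\<Sum>t\<in>T. scaleC (c t) t)"
    unfolding cspan_def by blast
  moreover have "scaleC d x = (\<Sum>t\<in>T. scaleC (d * c t) t)"
    using calculation by (simp add: scaleC_sum_right scaleC_scaleC)
  ultimately show "scaleC d x \<in> cspan X"
    unfolding cspan_def by (intro CollectI exI[of _ T] exI[of _ "\<lambda>t. d * c t"]) simp
qed

lemma cspan_subset_span: "cspan B \<subseteq> span (B \<union> scaleC \<i> ` (B::'a::cbanach_algebra_1 set))"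
proof
  fix x assume "x \<in> cspan B"
  then obtain T c where T: "T \<subseteq> B" "x = (\<Sum>t\<in>T. scaleC (c t) t)"
    unfolding cspan_def by blast
  have "x = (\<Sum>t\<in>T. Re (c t) *\<^sub>R t + Im (c t) *\<^sub>R scaleC \<i> t)"
    unfolding T(2) by (rule sum.cong[OF refl scaleC_Re_Im])
  also have "\<dots> \<in> span (B \<union> scaleC \<i> ` B)"
    using T(1) by (intro span_sum span_add span_scale span_base) auto
  finally show "x \<in> span (B \<union> scaleC \<i> ` B)" .
qed

lemma cfinite_dim_real_span:
  assumes "cfinite_dim (S::'a::cbanach_algebra_1 set)"
  obtains B where "finite B" "S \<subseteq> span B"
proof -
  obtain B where "finite B" "S \<subseteq> cspan B" using assms cfinite_dim_def by blast
  then show ?thesis using that[of "B \<union> scaleC \<i> ` B"] cspan_subset_span[of B] by blast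
qed

lemma dim_less_if_extra_element:
  fixes U W :: "'a::real_vector set"
  assumes U: "subspace U" and UW: "U \<subseteq> W" and y: "y \<in> W" "y \<notin> U"
    and W: "W \<subseteq> span B" and B: "finite B"
  shows "dim U < dim W"
proof -
  obtain A where A: "A \<subseteq> U" "independent A" "U \<subseteq> span A" "card A = dim U"
    by (rule basis_exists)
  obtain C where C: "C \<subseteq> W" "independent C" "W \<subseteq> span C" "card C = dim W"
    by (rule basis_exists)
  have "finite C"
    using independent_span_bound[OF B C(2)] C(1) W by auto
  moreover have "y \<notin> span A"
    using span_minimal[OF A(1) U] y by blast
  then have "independent (insert y A)"
    by (rule independent_insertI[OF _ A(2)])
  moreover have "insert y A \<subseteq> span C" using C(3) y A(1) UW by blast
  ultimately have "finite (insert y A) \<and> card (insert y A) \<le> card C"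
    by (intro independent_span_bound)
  moreover have "y \<notin> A" using y A(1) by blast
  ultimately show ?thesis using A(4) C(4) by auto
qed

lemma left_idealD: "left_ideal L \<Longrightarrow> x \<in> L \<Longrightarrow> a * x \<in> L"
  by (simp add: left_ideal_def)

lemma left_ideal_csubspace: "left_ideal L \<Longrightarrow> csubspace L"
  by (simp add: left_ideal_def)

lemma left_ideal_zero: "left_ideal {0::'a::cbanach_algebra_1}"
  by (simp add: left_ideal_def csubspace_def)

lemma left_ideal_mult_right_image:
  assumes "left_ideal (L::'a::cbanach_algebra_1 set)"
  shows "left_ideal ((\<lambda>x. x * a) ` L)"
  unfolding left_ideal_def csubspace_def
proof (intro conjI ballI allI)
  have L: "csubspace L" "\<And>b x. x \<in> L \<Longrightarrow> b * x \<in> L"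
    using assms by (auto simp: left_ideal_def)
  show "0 \<in> (\<lambda>x. x * a) ` L" using csubspace_0[OF L(1)] by force
  fix c b x y assume "x \<in> (\<lambda>x. x * a) ` L" "y \<in> (\<lambda>x. x * a) ` L"
  then obtain u v where uv: "u \<in> L" "v \<in> L" "x = u * a" "y = v * a" by blast
  show "x + y \<in> (\<lambda>x. x * a) ` L"
    using uv csubspace_add[OF L(1)] by (auto simp: distrib_right intro!: image_eqI[of _ _ "u + v"])
  show "scaleC c x \<in> (\<lambda>x. x * a) ` L"
    using uv csubspace_scaleC[OF L(1)] by (auto simp: mult_scaleC_left intro!: image_eqI[of _ _ "scaleC c u"])
  show "b * x \<in> (\<lambda>x. x * a) ` L"
    using uv L(2) by (auto simp: mult.assoc intro!: image_eqI[of _ _ "b * u"])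
qed

lemma left_ideal_principal: "left_ideal (range (\<lambda>x. x * (a::'a::cbanach_algebra_1)))"
  using left_ideal_mult_right_image[of UNIV a] by (simp add: left_ideal_def csubspace_def)

lemma left_ideal_mult_right_preimage:
  assumes "left_ideal (L::'a::cbanach_algebra_1 set)" "left_ideal J"
  shows "left_ideal {x\<in>L. x * a \<in> J}"
  using assms unfolding left_ideal_def csubspace_def
  by (auto simp: distrib_right mult_scaleC_left mult.assoc)

lemma minimal_left_ideal_principal:
  assumes m: "minimal_left_ideal L" and z: "z \<in> L" "z \<noteq> 0"
  shows "range (\<lambda>x. x * z) = L"
proof -
  have sub: "range (\<lambda>x. x * z) \<subseteq> L"
    using m z(1) left_idealD[of L z] by (auto simp: minimal_left_ideal_def)
  have "z \<in> range (\<lambda>x. x * z)" by (metis mult_1_left rangeI)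
  then have "range (\<lambda>x. x * z) \<noteq> {0}" using z(2) by blast
  then show ?thesis
    using m sub left_ideal_principal[of z] unfolding minimal_left_ideal_def by blast
qed

lemma minimal_left_ideal_mult_right_image:
  assumes m: "minimal_left_ideal (L::'a::cbanach_algebra_1 set)" and nz: "(\<lambda>x. x * a) ` L \<noteq> {0}"
  shows "minimal_left_ideal ((\<lambda>x. x * a) ` L)"
proof -
  have L: "left_ideal L" using m by (simp add: minimal_left_ideal_def)
  have "J = (\<lambda>x. x * a) ` L" if J: "left_ideal J" "J \<subseteq> (\<lambda>x. x * a) ` L" "J \<noteq> {0}" for J
  proof -
    obtain j where j: "j \<in> J" "j \<noteq> 0"
      using J(3) csubspace_0[OF left_ideal_csubspace[OF J(1)]] by blast
    then obtain u where "u \<in> L" "j = u * a" using J(2) by blast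
    with j have "u \<in> L" "u * a \<in> J" "u \<noteq> 0" by auto
    then have "{x\<in>L. x * a \<in> J} \<noteq> {0}" by blast
    then have "{x\<in>L. x * a \<in> J} = L"
      using m left_ideal_mult_right_preimage[OF L J(1)] unfolding minimal_left_ideal_def by blast
    then show ?thesis using J(2) by blast
  qed
  then show ?thesis
    using nz left_ideal_mult_right_image[OF L] unfolding minimal_left_ideal_def by blast
qed

section \<open>Semisimplicity and minimal idempotents\<close>

lemma left_ideal_add_principal:
  assumes "left_ideal (M::'a::cbanach_algebra_1 set)"
  shows "left_ideal {m + a * x | m a. m \<in> M}"
  unfolding left_ideal_def csubspace_def
proof (intro conjI ballI allI)
  have M: "csubspace M" "\<And>b m. m \<in> M \<Longrightarrow> b * m \<in> M"
    using assms by (auto simp: left_ideal_def)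
  have "0 = 0 + 0 * x" by simp
  then show "0 \<in> {m + a * x | m a. m \<in> M}"
    using csubspace_0[OF M(1)] by blast
  fix u v assume "u \<in> {m + a * x | m a. m \<in> M}" "v \<in> {m + a * x | m a. m \<in> M}"
  then obtain m1 a1 m2 a2 where "u = m1 + a1 * x" "v = m2 + a2 * x" "m1 \<in> M" "m2 \<in> M" by blast
  then show "u + v \<in> {m + a * x | m a. m \<in> M}"
    using csubspace_add[OF M(1)] by (intro CollectI exI[of _ "m1 + m2"] exI[of _ "a1 + a2"])
      (auto simp: algebra_simps)
next
  have M: "csubspace M" "\<And>b m. m \<in> M \<Longrightarrow> b * m \<in> M"
    using assms by (auto simp: left_ideal_def)
  fix c b u assume "u \<in> {m + a * x | m a. m \<in> M}"
  then obtain m1 a1 where u: "u = m1 + a1 * x" "m1 \<in> M" by blast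
  show "scaleC c u \<in> {m + a * x | m a. m \<in> M}"
    using u csubspace_scaleC[OF M(1)]
    by (intro CollectI exI[of _ "scaleC c m1"] exI[of _ "scaleC c a1"])
      (auto simp: scaleC_add_right mult_scaleC_left)
  show "b * u \<in> {m + a * x | m a. m \<in> M}"
    using u M(2) by (intro CollectI exI[of _ "b * m1"] exI[of _ "b * a1"])
      (auto simp: distrib_left mult.assoc)
qed

text \<open>If \<open>x \<notin> M\<close>, maximality gives \<open>1 = m + a x\<close> with \<open>m \<in> M\<close>, and then
  \<open>(1 + a x) m = 1 - (a x)\<^sup>2 = 1\<close> puts \<open>1\<close> into \<open>M\<close>.\<close>

lemma square_zero_left_ideal_subset_maximal:
  assumes L: "left_ideal (L::'a::cbanach_algebra_1 set)" and nil: "\<And>x y. x \<in> L \<Longrightarrow> y \<in> L \<Longrightarrow> x * y = 0"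
    and M: "maximal_left_ideal M"
  shows "L \<subseteq> M"
proof
  fix x assume x: "x \<in> L"
  show "x \<in> M"
  proof (rule ccontr)
    assume xM: "x \<notin> M"
    have M_ideal: "left_ideal M" "M \<noteq> UNIV" using M unfolding maximal_left_ideal_def by auto
    let ?J = "{m + a * x | m a. m \<in> M}"
    have "M \<subseteq> ?J" by (force intro: exI[of _ 0])
    moreover have "x \<in> ?J"
      using csubspace_0[OF left_ideal_csubspace[OF M_ideal(1)]] by (force intro: exI[of _ 1])
    ultimately have "?J = UNIV"
      using M xM left_ideal_add_principal[OF M_ideal(1)] unfolding maximal_left_ideal_def by blast
    then have "1 \<in> ?J" by (simp only: UNIV_I)
    then obtain m a where ma: "1 = m + a * x" "m \<in> M" by blast
    then have "m = 1 - a * x" by (simp add: eq_diff_eq)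
    then have "(1 + a * x) * m = 1 - (a * x) * (a * x)"
      by (simp add: distrib_right right_diff_distrib)
    also have "\<dots> = 1" using nil[OF left_idealD[OF L x] left_idealD[OF L x]] by simp
    finally have "1 \<in> M" using left_idealD[OF M_ideal(1) ma(2), of "1 + a * x"] by simp
    then have "y \<in> M" for y using left_idealD[OF M_ideal(1), of 1 y] by simp
    then show False using M_ideal(2) by blast
  qed
qed

lemma semisimple_square_zero_left_ideal:
  assumes "semisimple TYPE('a::cbanach_algebra_1)"
    and "left_ideal (L::'a set)" "\<And>x y. x \<in> L \<Longrightarrow> y \<in> L \<Longrightarrow> x * y = 0" "x \<in> L"
  shows "x = 0"
  using assms square_zero_left_ideal_subset_maximal[of L]
  unfolding semisimple_def jacobson_radical_def by blast

lemma minimal_left_ideal_idempotent: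
  assumes ss: "semisimple TYPE('a::cbanach_algebra_1)" and m: "minimal_left_ideal (L::'a set)"
  obtains p where "p \<in> L" "p * p = p" "p \<noteq> 0" "\<And>x. x \<in> L \<Longrightarrow> x * p = x"
proof -
  have L: "left_ideal L" "L \<noteq> {0}" using m by (auto simp: minimal_left_ideal_def)
  obtain x y where xy: "x \<in> L" "y \<in> L" "x * y \<noteq> 0"
    using semisimple_square_zero_left_ideal[OF ss L(1)] L(2) csubspace_0[OF left_ideal_csubspace[OF L(1)]]
    by blast
  have "(\<lambda>x. x * y) ` L \<subseteq> L" using left_idealD[OF L(1) xy(2)] by blast
  moreover have "(\<lambda>x. x * y) ` L \<noteq> {0}" using xy by blast
  ultimately have "(\<lambda>x. x * y) ` L = L"
    using m left_ideal_mult_right_image[OF L(1)] unfolding minimal_left_ideal_def by blast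
  then obtain p where p: "p \<in> L" "p * y = y" using xy(2) by (metis imageE)
  let ?N = "{x\<in>L. x * y \<in> {0}}"
  have "?N \<noteq> L" using xy by auto
  then have N: "?N = {0}"
    using m left_ideal_mult_right_preimage[OF L(1) left_ideal_zero] unfolding minimal_left_ideal_def by blast
  have unit: "x * p = x" if "x \<in> L" for x
  proof -
    have "x * p - x \<in> ?N"
      using that p csubspace_diff[OF left_ideal_csubspace[OF L(1)] left_idealD[OF L(1) p(1)] that]
      by (simp add: left_diff_distrib mult.assoc)
    then have "x * p - x = 0" using N by blast
    then show ?thesis by simp
  qed
  have "p \<noteq> 0" using p xy(3) by auto
  then show ?thesis using that p(1) unit[OF p(1)] unit by blast
qed

section \<open>The socle is a two-sided ideal\<close>

lemma csubspace_socle: "csubspace (socle::'a::cbanach_algebra_1 set)"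
  unfolding socle_def by (rule csubspace_cspan)

lemma minimal_left_ideal_subset_socle: "minimal_left_ideal L \<Longrightarrow> L \<subseteq> (socle::'a::cbanach_algebra_1 set)"
  unfolding socle_def by (blast intro: cspan_base)

lemma socle_induct:
  assumes "csubspace P" "\<And>L x. minimal_left_ideal L \<Longrightarrow> x \<in> L \<Longrightarrow> x \<in> P"
  shows "(socle::'a::cbanach_algebra_1 set) \<subseteq> P"
  unfolding socle_def by (rule cspan_minimal) (use assms in auto)

lemma mult_socle_left:
  assumes "x \<in> socle" shows "a * x \<in> (socle::'a::cbanach_algebra_1 set)"
proof -
  have "socle \<subseteq> {x::'a. \<forall>a. a * x \<in> socle}"
  proof (rule socle_induct)
    show "csubspace {x::'a. \<forall>a. a * x \<in> socle}"
      unfolding csubspace_def using csubspace_socle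
      by (auto simp: distrib_left mult_scaleC_right intro: csubspace_add csubspace_scaleC csubspace_0)
  next
    fix L x assume m: "minimal_left_ideal (L::'a set)" and "x \<in> L"
    then have "a * x \<in> L" for a by (simp add: minimal_left_ideal_def left_idealD)
    then show "x \<in> {x. \<forall>a. a * x \<in> socle}" using minimal_left_ideal_subset_socle[OF m] by blast
  qed
  then show ?thesis using assms by blast
qed

lemma mult_socle_right:
  assumes "x \<in> socle" shows "x * a \<in> (socle::'a::cbanach_algebra_1 set)"
proof -
  have "socle \<subseteq> {x::'a. \<forall>a. x * a \<in> socle}"
  proof (rule socle_induct)
    show "csubspace {x::'a. \<forall>a. x * a \<in> socle}"
      unfolding csubspace_def using csubspace_socle
      by (auto simp: distrib_right mult_scaleC_left intro: csubspace_add csubspace_scaleC csubspace_0)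
  next
    fix L x assume m: "minimal_left_ideal (L::'a set)" and x: "x \<in> L"
    have "x * a \<in> socle" for a
    proof (cases "(\<lambda>x. x * a) ` L = {0}")
      case True
      then show ?thesis using x csubspace_0[OF csubspace_socle] by (metis image_eqI singletonD)
    next
      case False
      then show ?thesis
        using minimal_left_ideal_mult_right_image[OF m False] x minimal_left_ideal_subset_socle by blast
    qed
    then show "x \<in> {x. \<forall>a. x * a \<in> socle}" by blast
  qed
  then show ?thesis using assms by blast
qed

section \<open>A finite-dimensional socle has an identity\<close>

lemma idempotent_orthogonal_sum:
  fixes e q :: "'a::ring"
  assumes "e * e = e" "q * q = q" "q * e = 0"
  shows "(e + q - e * q) * (e + q - e * q) = e + q - e * q"
    and "e * (e + q - e * q) = e" and "q * (e + q - e * q) = q"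
  using assms by (simp_all add: algebra_simps mult.assoc[symmetric])

lemma socle_orthogonal_idempotent:
  assumes ss: "semisimple TYPE('a::cbanach_algebra_1)" and e: "e * e = e"
    and s: "s \<in> (socle::'a set)" "s * e \<noteq> s"
  obtains q where "q \<in> (socle::'a set)" "q * q = q" "q \<noteq> 0" "q * e = 0"
proof -
  have "\<not> socle \<subseteq> {x::'a. x * e = x}" using s by blast
  moreover have "csubspace {x::'a. x * e = x}"
    unfolding csubspace_def by (simp add: distrib_right mult_scaleC_left)
  ultimately obtain L t where L: "minimal_left_ideal L" "t \<in> L" "t * e \<noteq> t"
    using socle_induct by blast
  have "t * (1 - e) \<noteq> 0" using L(3) by (simp add: algebra_simps)
  then have "(\<lambda>x. x * (1 - e)) ` L \<noteq> {0}" using L(2) by blast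
  then have m: "minimal_left_ideal ((\<lambda>x. x * (1 - e)) ` L)"
    by (rule minimal_left_ideal_mult_right_image[OF L(1)])
  then obtain q where q: "q \<in> (\<lambda>x. x * (1 - e)) ` L" "q * q = q" "q \<noteq> 0"
    by (rule minimal_left_ideal_idempotent[OF ss])
  then obtain x where "q = x * (1 - e)" by blast
  then have "q * e = 0" using e by (simp add: right_diff_distrib left_diff_distrib mult.assoc)
  then show ?thesis using that q minimal_left_ideal_subset_socle[OF m] by blast
qed

lemma socle_right_identity:
  assumes ss: "semisimple TYPE('a::cbanach_algebra_1)" and fd: "cfinite_dim (socle::'a set)"
  obtains e where "e \<in> (socle::'a set)" "e * e = e" "\<And>s. s \<in> (socle::'a set) \<Longrightarrow> s * e = s"
proof -
  let ?S = "socle::'a set"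
  obtain B' where B': "finite B'" "?S \<subseteq> span B'"
    using cfinite_dim_real_span[OF fd] by blast
  define V where "V e = (\<lambda>s. s * e) ` ?S" for e
  have V_socle: "V e \<subseteq> ?S" for e
    unfolding V_def using mult_socle_right by blast
  have subspace_V: "subspace (V e)" for e
    unfolding V_def by (intro linear_subspace_image bounded_linear.linear[OF bounded_linear_mult_left]
        csubspace_imp_subspace csubspace_socle)
  define P where "P e \<longleftrightarrow> e \<in> ?S \<and> e * e = e" for e
  have "P 0" unfolding P_def using csubspace_0[OF csubspace_socle] by simp
  moreover have "\<forall>e. P e \<longrightarrow> dim (V e) < card B' + 1"
    using dim_le_card[OF subset_trans[OF V_socle B'(2)] B'(1)] by (simp add: less_Suc_eq_le)
  ultimately obtain e where e: "P e" "\<And>f. P f \<Longrightarrow> dim (V f) \<le> dim (V e)"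
    using ex_has_greatest_nat[of P 0 "\<lambda>e. dim (V e)"] by blast
  have eS: "e \<in> ?S" and ee: "e * e = e" using e(1) by (auto simp: P_def)
  have "s * e = s" if s: "s \<in> ?S" for s
  proof (rule ccontr)
    assume "s * e \<noteq> s"
    then obtain q where q: "q \<in> ?S" "q * q = q" "q \<noteq> 0" "q * e = 0"
      by (rule socle_orthogonal_idempotent[OF ss ee s])
    define f where "f = e + q - e * q"
    note f = idempotent_orthogonal_sum[OF ee q(2,4), folded f_def]
    have "P f"
      unfolding P_def f_def using f(1) q(1) eS mult_socle_left[OF q(1)]
      by (simp add: f_def csubspace_add csubspace_diff csubspace_socle)
    have "V e \<subseteq> V f"
    proof
      fix y assume "y \<in> V e"
      then obtain s' where "s' \<in> ?S" "y = (s' * e) * f" unfolding V_def using f(2) by (auto simp: mult.assoc)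
      then show "y \<in> V f" unfolding V_def using mult_socle_right by blast
    qed
    moreover have "q \<in> V f" unfolding V_def using f(3) q(1) by (metis image_eqI)
    moreover have "q \<notin> V e"
      unfolding V_def using ee q(3,4) by (auto simp: mult.assoc)
    ultimately have "dim (V e) < dim (V f)"
      using dim_less_if_extra_element[OF subspace_V _ _ _ subset_trans[OF V_socle B'(2)] B'(1)] by blast
    then show False using e(2)[OF \<open>P f\<close>] by simp
  qed
  then show ?thesis using that eS ee by blast
qed

lemma socle_identity:
  assumes ss: "semisimple TYPE('a::cbanach_algebra_1)" and fd: "cfinite_dim (socle::'a set)"
  obtains e where "e \<in> (socle::'a set)" "\<And>s. s \<in> (socle::'a set) \<Longrightarrow> e * s = s \<and> s * e = s"
proof -
  obtain e :: 'a where e: "e \<in> socle" "e * e = e" "\<And>s. s \<in> (socle::'a set) \<Longrightarrow> s * e = s"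
    using socle_right_identity[OF ss fd] by blast
  have "e * s = s" if s: "s \<in> socle" for s
  proof -
    define t where "t = s - e * s"
    have t: "t \<in> socle" "e * t = 0"
      unfolding t_def using csubspace_diff[OF csubspace_socle s mult_socle_left[OF s]] e(2)
      by (simp_all add: right_diff_distrib mult.assoc[symmetric])
    have "t * b * t = 0" for b
      using e(3)[OF mult_socle_right[OF t(1), of b]] t(2) by (metis mult.assoc mult_zero_right)
    then have "x * y = 0" if "x \<in> range (\<lambda>a. a * t)" "y \<in> range (\<lambda>a. a * t)" for x y
      using that by (auto simp: mult.assoc)
    then have "t = 0"
      using semisimple_square_zero_left_ideal[OF ss left_ideal_principal] by (metis mult_1_left rangeI)
    then show ?thesis unfolding t_def by simp
  qed
  then show ?thesis using that e(1,3) by blast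
qed

lemma has_identity_closure_socle:
  assumes ss: "semisimple TYPE('a::cbanach_algebra_1)" and fd: "cfinite_dim (socle::'a set)"
  shows "has_identity (closure (socle::'a set))"
proof -
  obtain e where e: "e \<in> (socle::'a set)" "\<And>s. s \<in> (socle::'a set) \<Longrightarrow> e * s = s \<and> s * e = s"
    using socle_identity[OF ss fd] by blast
  have "closed {x::'a. e * x = x \<and> x * e = x}"
    by (intro closed_Collect_conj closed_Collect_eq continuous_intros)
  then have "closure socle \<subseteq> {x::'a. e * x = x \<and> x * e = x}"
    using e(2) by (intro closure_minimal) auto
  then show ?thesis unfolding has_identity_def using e(1) closure_subset by blast
qed

section \<open>Hahn-Banach\<close>

text \<open>A partial linear functional dominated by the norm, represented by its graph so that Zorn's
  lemma can be applied to set inclusion. Single-valuedness of the graph is a consequence.\<close>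

definition norm_dominated_graph :: "('a::real_normed_vector \<times> real) set \<Rightarrow> bool" where
  "norm_dominated_graph G \<longleftrightarrow>
     (\<forall>x t y s. (x, t) \<in> G \<longrightarrow> (y, s) \<in> G \<longrightarrow> (x + y, t + s) \<in> G) \<and>
     (\<forall>x t c. (x, t) \<in> G \<longrightarrow> (c *\<^sub>R x, c * t) \<in> G) \<and>
     (\<forall>x t. (x, t) \<in> G \<longrightarrow> t \<le> norm x)"

lemma norm_dominated_graph_add:
  "norm_dominated_graph G \<Longrightarrow> (x, t) \<in> G \<Longrightarrow> (y, s) \<in> G \<Longrightarrow> (x + y, t + s) \<in> G"
  unfolding norm_dominated_graph_def by blast

lemma norm_dominated_graph_scaleR:
  "norm_dominated_graph G \<Longrightarrow> (x, t) \<in> G \<Longrightarrow> (c *\<^sub>R x, c * t) \<in> G"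
  unfolding norm_dominated_graph_def by blast

lemma norm_dominated_graph_le_norm: "norm_dominated_graph G \<Longrightarrow> (x, t) \<in> G \<Longrightarrow> t \<le> norm x"
  unfolding norm_dominated_graph_def by blast

lemma norm_dominated_graph_single_valued:
  assumes G: "norm_dominated_graph G" and xt: "(x, t) \<in> G" and xs: "(x, s) \<in> G"
  shows "t = s"
proof -
  have "(x + (-1) *\<^sub>R x, t + (-1) * s) \<in> G" "(x + (-1) *\<^sub>R x, s + (-1) * t) \<in> G"
    using norm_dominated_graph_add[OF G xt norm_dominated_graph_scaleR[OF G xs]]
      norm_dominated_graph_add[OF G xs norm_dominated_graph_scaleR[OF G xt]] .
  then have "t - s \<le> 0" "s - t \<le> 0" using norm_dominated_graph_le_norm[OF G] by force+
  then show ?thesis by simp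
qed

lemma norm_add_scaleR_pos:
  fixes x y :: "'a::real_normed_vector"
  assumes "d > 0"
  shows "norm (x + d *\<^sub>R y) = d * norm ((1 / d) *\<^sub>R x + y)"
proof -
  have "x + d *\<^sub>R y = d *\<^sub>R ((1 / d) *\<^sub>R x + y)"
    using assms by (simp add: scaleR_add_right)
  then show ?thesis using assms by simp
qed

text \<open>The admissible values \<open>k\<close> at \<open>y\<close> lie between \<open>t - \<parallel>x - y\<parallel>\<close> and \<open>\<parallel>x' + y\<parallel> - t'\<close>
  for all \<open>(x, t), (x', t') \<in> G\<close>; such \<open>k\<close> exist because \<open>t + t' \<le> \<parallel>x + x'\<parallel>\<close>.\<close>

lemma norm_dominated_graph_extension_value:
  fixes G :: "('a::real_normed_vector \<times> real) set"
  assumes G: "norm_dominated_graph G" and "(x0, t0) \<in> G"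
  obtains k where "\<And>x t c. (x, t) \<in> G \<Longrightarrow> t + c * k \<le> norm (x + c *\<^sub>R y)"
proof -
  have key: "t - norm (x - y) \<le> norm (x' + y) - t'" if "(x, t) \<in> G" "(x', t') \<in> G" for x t x' t'
  proof -
    have "t + t' \<le> norm (x + x')"
      using norm_dominated_graph_le_norm[OF G norm_dominated_graph_add[OF G that]] .
    also have "\<dots> \<le> norm (x - y) + norm (x' + y)"
      using norm_triangle_ineq[of "x - y" "x' + y"] by simp
    finally show ?thesis by simp
  qed
  define K where "K = {t - norm (x - y) | x t. (x, t) \<in> G}"
  define k where "k = Sup K"
  have "K \<noteq> {}" "bdd_above K"
    unfolding K_def bdd_above_def using key[OF _ \<open>(x0, t0) \<in> G\<close>] \<open>(x0, t0) \<in> G\<close> by blast+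
  then have lo: "t - norm (x - y) \<le> k" and hi: "k \<le> norm (x + y) - t" if "(x, t) \<in> G" for x t
    unfolding k_def K_def using that key by (auto intro!: cSup_upper cSup_least)
  have bound: "t + c * k \<le> norm (x + c *\<^sub>R y)" if xt: "(x, t) \<in> G" for x t c
  proof (cases c "0::real" rule: linorder_cases)
    case less
    define d where "d = - c"
    have d: "d > 0" "c = - d" using less by (simp_all add: d_def)
    have "(1 / d) * t - norm ((1 / d) *\<^sub>R x - y) \<le> k"
      using lo[OF norm_dominated_graph_scaleR[OF G xt]] .
    then have "t - d * norm ((1 / d) *\<^sub>R x + - y) \<le> d * k"
      using d(1) by (simp add: field_simps)
    then show ?thesis using norm_add_scaleR_pos[OF d(1), of x "- y"] d(2) by simp
  next
    case equal
    then show ?thesis using norm_dominated_graph_le_norm[OF G xt] by simp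
  next
    case greater
    have "k \<le> norm ((1 / c) *\<^sub>R x + y) - (1 / c) * t"
      using hi[OF norm_dominated_graph_scaleR[OF G xt]] .
    then have "c * k \<le> c * norm ((1 / c) *\<^sub>R x + y) - t"
      using greater by (simp add: field_simps)
    then show ?thesis using norm_add_scaleR_pos[OF greater, of x y] by simp
  qed
  show ?thesis by (rule that[OF bound])
qed

lemma norm_dominated_graph_extend:
  fixes G :: "('a::real_normed_vector \<times> real) set"
  assumes G: "norm_dominated_graph G" and "(x0, t0) \<in> G"
  obtains G' where "norm_dominated_graph G'" "G \<subseteq> G'" "y \<in> fst ` G'"
proof -
  obtain k where bound: "\<And>x t c. (x, t) \<in> G \<Longrightarrow> t + c * k \<le> norm (x + c *\<^sub>R y)"
    using norm_dominated_graph_extension_value[OF assms] by blast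
  define G' where "G' = {(x + c *\<^sub>R y, t + c * k) | x t c. (x, t) \<in> G}"
  have "norm_dominated_graph G'"
    unfolding norm_dominated_graph_def
  proof (intro conjI allI impI)
    fix u a w b assume "(u, a) \<in> G'" "(w, b) \<in> G'"
    then obtain x t c x' t' c' where "u = x + c *\<^sub>R y" "a = t + c * k" "(x, t) \<in> G"
      and "w = x' + c' *\<^sub>R y" "b = t' + c' * k" "(x', t') \<in> G"
      unfolding G'_def by blast
    then show "(u + w, a + b) \<in> G'"
      unfolding G'_def using norm_dominated_graph_add[OF G]
      by (intro CollectI exI[of _ "x + x'"] exI[of _ "t + t'"] exI[of _ "c + c'"])
        (auto simp: algebra_simps scaleR_add_left)
  next
    fix u a d assume "(u, a) \<in> G'"
    then obtain x t c where "u = x + c *\<^sub>R y" "a = t + c * k" and xt: "(x, t) \<in> G"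
      unfolding G'_def by blast
    then have "d *\<^sub>R u = d *\<^sub>R x + (d * c) *\<^sub>R y" "d * a = d * t + (d * c) * k"
      by (simp_all add: algebra_simps)
    with norm_dominated_graph_scaleR[OF G xt] show "(d *\<^sub>R u, d * a) \<in> G'" unfolding G'_def by blast
  next
    fix u a assume "(u, a) \<in> G'"
    then show "a \<le> norm u" unfolding G'_def using bound by blast
  qed
  moreover have "G \<subseteq> G'"
  proof
    fix z assume "z \<in> G"
    moreover obtain x t where "z = (x, t)" by fastforce
    moreover have "(x, t) = (x + 0 *\<^sub>R y, t + 0 * k)" by simp
    ultimately show "z \<in> G'" unfolding G'_def by blast
  qed
  moreover have "(0, 0) \<in> G"
    using norm_dominated_graph_scaleR[OF G \<open>(x0, t0) \<in> G\<close>, of 0] by simp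
  then have "(0 + 1 *\<^sub>R y, 0 + 1 * k) \<in> G'" unfolding G'_def by blast
  then have "y \<in> fst ` G'" by force
  ultimately show ?thesis using that by blast
qed

lemma norm_dominated_graph_chain_Union:
  assumes "\<And>G. G \<in> C \<Longrightarrow> norm_dominated_graph G"
    and chain: "\<And>G H. G \<in> C \<Longrightarrow> H \<in> C \<Longrightarrow> G \<subseteq> H \<or> H \<subseteq> G"
  shows "norm_dominated_graph (\<Union>C)"
  unfolding norm_dominated_graph_def
proof (intro conjI allI impI)
  fix x t y s assume "(x, t) \<in> \<Union>C" "(y, s) \<in> \<Union>C"
  then obtain G H where GH: "G \<in> C" "H \<in> C" "(x, t) \<in> G" "(y, s) \<in> H" by blast
  show "(x + y, t + s) \<in> \<Union>C"
    using chain[OF GH(1,2)] GH assms(1) norm_dominated_graph_add by blast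
next
  fix x t c assume "(x, t) \<in> \<Union>C"
  then show "(c *\<^sub>R x, c * t) \<in> \<Union>C" using assms(1) norm_dominated_graph_scaleR by blast
next
  fix x t assume "(x, t) \<in> \<Union>C"
  then show "t \<le> norm x" using assms(1) norm_dominated_graph_le_norm by blast
qed

theorem real_hahn_banach:
  fixes v :: "'a::real_normed_vector"
  obtains \<psi> :: "'a \<Rightarrow> real" where "linear \<psi>" "\<And>x. \<bar>\<psi> x\<bar> \<le> norm x" "\<psi> v = norm v"
proof -
  define A where "A = {G::('a \<times> real) set. norm_dominated_graph G \<and> (v, norm v) \<in> G}"
  have "range (\<lambda>c. (c *\<^sub>R v, c * norm v)) \<in> A"
    unfolding A_def norm_dominated_graph_def
    by (auto simp: scaleR_add_left[symmetric] distrib_right[symmetric] image_iff mult_right_mono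
        intro: exI[of _ 1])
  then have "A \<noteq> {}" by blast
  moreover have "\<Union>C \<in> A" if "C \<noteq> {}" "subset.chain A C" for C
    using that norm_dominated_graph_chain_Union[of C] unfolding A_def subset_chain_def by blast
  ultimately obtain M where M: "norm_dominated_graph M" "(v, norm v) \<in> M"
    and max: "\<And>G. G \<in> A \<Longrightarrow> M \<subseteq> G \<Longrightarrow> G = M"
    using subset_Zorn_nonempty[of A] unfolding A_def by blast
  have total: "\<exists>t. (x, t) \<in> M" for x
  proof -
    obtain G where "norm_dominated_graph G" "M \<subseteq> G" "x \<in> fst ` G"
      by (rule norm_dominated_graph_extend[OF M])
    then show ?thesis using max M(2) unfolding A_def by force
  qed
  define \<psi> where "\<psi> x = (THE t. (x, t) \<in> M)" for x
  have \<psi>: "\<psi> x = t" if "(x, t) \<in> M" for x t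
    unfolding \<psi>_def using that norm_dominated_graph_single_valued[OF M(1)] by blast
  have graph: "(x, \<psi> x) \<in> M" for x using total[of x] \<psi> by blast
  have "linear \<psi>"
    by (rule linearI) (use \<psi> graph norm_dominated_graph_add[OF M(1)] norm_dominated_graph_scaleR[OF M(1)] in auto)
  moreover have "\<bar>\<psi> x\<bar> \<le> norm x" for x
    using norm_dominated_graph_le_norm[OF M(1) graph, of x] norm_dominated_graph_le_norm[OF M(1) graph, of "- x"]
      linear_neg[OF \<open>linear \<psi>\<close>, of x] by simp
  ultimately show ?thesis using that \<psi>[OF M(2)] by blast
qed

lemma complex_functional_nonzero:
  fixes v :: "'a::cbanach_algebra_1"
  assumes "v \<noteq> 0"
  obtains \<phi> :: "'a \<Rightarrow> complex"
  where "bounded_linear \<phi>" "\<And>c x. \<phi> (scaleC c x) = c * \<phi> x" "\<phi> v \<noteq> 0"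
proof -
  obtain \<psi> :: "'a \<Rightarrow> real" where \<psi>: "linear \<psi>" "\<And>x. \<bar>\<psi> x\<bar> \<le> norm x" "\<psi> v = norm v"
    using real_hahn_banach[of v] by blast
  define \<phi> where "\<phi> x = Complex (\<psi> x) (- \<psi> (scaleC \<i> x))" for x
  have \<psi>_scaleC: "\<psi> (scaleC c x) = Re c * \<psi> x + Im c * \<psi> (scaleC \<i> x)" for c x
    by (subst scaleC_Re_Im) (simp add: linear_add[OF \<psi>(1)] linear_scale[OF \<psi>(1)])
  have add: "\<phi> (x + y) = \<phi> x + \<phi> y" for x y
    unfolding \<phi>_def by (simp add: scaleC_add_right linear_add[OF \<psi>(1)] complex_eq_iff)
  have scale: "\<phi> (scaleC c x) = c * \<phi> x" for c x
    unfolding \<phi>_def using \<psi>_scaleC[of c x] \<psi>_scaleC[of "\<i> * c" x]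
    by (simp add: scaleC_scaleC complex_eq_iff algebra_simps)
  have "bounded_linear \<phi>"
  proof (rule bounded_linear_intro[where K = 2])
    show "\<phi> (r *\<^sub>R x) = r *\<^sub>R \<phi> x" for r x
      using scale[of "complex_of_real r" x] by (simp add: scaleC_of_real scaleR_conv_of_real)
    show "norm (\<phi> x) \<le> norm x * 2" for x
    proof -
      have "norm (\<phi> x) \<le> \<bar>\<psi> x\<bar> + \<bar>\<psi> (scaleC \<i> x)\<bar>"
        using cmod_le[of "\<phi> x"] unfolding \<phi>_def by simp
      also have "\<dots> \<le> norm x + norm (scaleC \<i> x)" by (intro add_mono \<psi>(2))
      finally show ?thesis by (simp add: norm_scaleC)
    qed
  qed (rule add)
  moreover have "\<phi> v \<noteq> 0"
    using \<psi>(3) assms unfolding \<phi>_def by (simp add: complex_eq_iff)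
  ultimately show ?thesis using that scale by blast
qed

section \<open>Gelfand-Mazur for corners of minimal idempotents\<close>

lemma resolvent_identity_continuous:
  fixes R :: "complex \<Rightarrow> 'a::cbanach_algebra_1"
  assumes res: "\<And>l m. R l - R m = scaleC (l - m) (R l * R m)"
  shows "(R \<longlongrightarrow> R m) (at m)"
proof -
  have near: "norm (R l - R m) \<le> cmod (l - m) * (2 * norm (R m) * norm (R m))"
    if small: "cmod (l - m) * norm (R m) \<le> 1/2" for l
  proof -
    have diff: "norm (R l - R m) \<le> cmod (l - m) * (norm (R l) * norm (R m))"
      unfolding res norm_scaleC by (intro mult_left_mono norm_mult_ineq) simp
    also have "\<dots> = norm (R l) * (cmod (l - m) * norm (R m))" by (simp add: mult_ac)
    also have "\<dots> \<le> norm (R l) * (1/2)" by (intro mult_left_mono small) simp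
    finally have "norm (R l) \<le> 2 * norm (R m)"
      using norm_triangle_sub[of "R l" "R m"] by simp
    then have "cmod (l - m) * (norm (R l) * norm (R m)) \<le> cmod (l - m) * (2 * norm (R m) * norm (R m))"
      by (intro mult_left_mono mult_right_mono) simp_all
    with diff show ?thesis by linarith
  qed
  define d where "d = 1 / (2 * (norm (R m) + 1))"
  have d: "d > 0" "d * norm (R m) \<le> 1/2"
    unfolding d_def by (auto simp: field_simps add_pos_nonneg)
  have "\<forall>\<^sub>F l in at m. norm (R l - R m) \<le> norm (l - m) * (2 * norm (R m) * norm (R m))"
    unfolding eventually_at
  proof (intro exI[of _ d] conjI ballI impI)
    fix l assume "l \<noteq> m \<and> dist l m < d"
    then have "cmod (l - m) * norm (R m) \<le> d * norm (R m)"
      by (intro mult_right_mono) (simp_all add: dist_norm)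
    then show "norm (R l - R m) \<le> norm (l - m) * (2 * norm (R m) * norm (R m))"
      using near d(2) by simp
  qed (use d in simp)
  then have "((\<lambda>l. R l - R m) \<longlongrightarrow> 0) (at m)"
    using tendsto_0_le[of "\<lambda>l. l - m"] LIM_zero_iff[of "\<lambda>l. l" m "at m"] by simp
  then show ?thesis by (simp add: LIM_zero_iff)
qed

lemma resolvent_identity_has_field_derivative:
  fixes R :: "complex \<Rightarrow> 'a::cbanach_algebra_1" and \<phi> :: "'a \<Rightarrow> complex"
  assumes res: "\<And>l m. R l - R m = scaleC (l - m) (R l * R m)"
    and \<phi>: "bounded_linear \<phi>" "\<And>c x. \<phi> (scaleC c x) = c * \<phi> x"
  shows "((\<lambda>l. \<phi> (R l)) has_field_derivative \<phi> (R m * R m)) (at m)"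
proof -
  have "\<phi> (R l) - \<phi> (R m) = (l - m) * \<phi> (R l * R m)" for l
    using linear_diff[OF bounded_linear.linear[OF \<phi>(1)], of "R l" "R m"] by (simp only: res \<phi>(2))
  then have eq: "\<phi> (R l * R m) = (\<phi> (R l) - \<phi> (R m)) / (l - m)" if "l \<noteq> m" for l
    using that by simp
  have ev: "\<forall>\<^sub>F l in at m. \<phi> (R l * R m) = (\<phi> (R l) - \<phi> (R m)) / (l - m)"
    unfolding eventually_at_filter by (rule always_eventually) (use eq in blast)
  have "((\<lambda>l. \<phi> (R l * R m)) \<longlongrightarrow> \<phi> (R m * R m)) (at m)"
    by (intro bounded_linear.tendsto[OF \<phi>(1)] tendsto_mult resolvent_identity_continuous[OF res]
        tendsto_const)
  then show ?thesis
    unfolding has_field_derivative_iff by (rule iffD1[OF tendsto_cong[OF ev]])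
qed

lemma resolvent_norm_le:
  fixes p z r :: "'a::cbanach_algebra_1"
  assumes r: "r * (z - scaleC l p) = p" "r * p = r" and l: "2 * norm z + 1 \<le> cmod l"
  shows "cmod l * norm r \<le> 2 * norm p"
proof -
  have "scaleC l r = r * z - p"
    using r by (simp add: right_diff_distrib mult_scaleC_right algebra_simps)
  then have "cmod l * norm r = norm (r * z - p)" by (metis norm_scaleC)
  then have "cmod l * norm r \<le> norm r * norm z + norm p"
    using norm_triangle_ineq4[of "r * z" p] norm_mult_ineq[of r z] by linarith
  also have "norm r * norm z \<le> norm r * ((cmod l - 1) / 2)"
    using l by (intro mult_left_mono) simp_all
  finally have "norm r + norm r * cmod l \<le> norm p * 2" by (simp add: field_simps)
  then show ?thesis by (smt (verit) mult.commute norm_ge_zero)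
qed

text \<open>With \<open>R \<lambda> = (z - \<lambda> p)\<inverse>\<close> in the corner algebra, \<open>\<phi> \<circ> R\<close> is entire and vanishes at infinity for a
  functional \<open>\<phi>\<close> with \<open>\<phi> (R 0) \<noteq> 0\<close>, contradicting Liouville's theorem.\<close>

lemma no_entire_resolvent:
  fixes p z :: "'a::cbanach_algebra_1" and R :: "complex \<Rightarrow> 'a"
  assumes "p \<noteq> 0"
    and left: "\<And>l. R l * (z - scaleC l p) = p" and right: "\<And>l. (z - scaleC l p) * R l = p"
    and corner: "\<And>l. R l * p = R l" "\<And>l. p * R l = R l"
  shows False
proof -
  have res: "R l - R m = scaleC (l - m) (R l * R m)" for l m
  proof -
    have "R l - R m = R l * ((z - scaleC m p) * R m) - (R l * (z - scaleC l p)) * R m"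
      using left right corner by simp
    also have "\<dots> = R l * (scaleC (l - m) p * R m)"
      by (simp add: mult.assoc left_diff_distrib right_diff_distrib scaleC_diff_left)
    also have "\<dots> = scaleC (l - m) (R l * R m)"
      by (simp add: mult_scaleC_left mult_scaleC_right corner)
    finally show ?thesis .
  qed
  have "R 0 \<noteq> 0" using left[of 0] \<open>p \<noteq> 0\<close> by auto
  then obtain \<phi> :: "'a \<Rightarrow> complex"
    where \<phi>: "bounded_linear \<phi>" "\<And>c x. \<phi> (scaleC c x) = c * \<phi> x" "\<phi> (R 0) \<noteq> 0"
    using complex_functional_nonzero by blast
  obtain K where K: "K > 0" "\<And>x. norm (\<phi> x) \<le> norm x * K"
    using bounded_linear.pos_bounded[OF \<phi>(1)] by blast
  have "(\<lambda>l. \<phi> (R l)) holomorphic_on UNIV"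
    using resolvent_identity_has_field_derivative[OF res \<phi>(1,2)] by (auto simp: holomorphic_on_open)
  moreover have "\<forall>\<^sub>F l in at_infinity. norm (\<phi> (R l)) \<le> norm (inverse l) * (2 * norm p * K)"
    unfolding eventually_at_infinity
  proof (intro exI[of _ "2 * norm z + 1"] allI impI)
    fix l :: complex assume l: "2 * norm z + 1 \<le> norm l"
    then have "cmod l > 0" by (smt (verit) norm_ge_zero)
    then have "norm (R l) \<le> 2 * norm p / cmod l"
      using resolvent_norm_le[OF left corner(1) l] by (simp add: field_simps)
    then have "norm (\<phi> (R l)) \<le> (2 * norm p / cmod l) * K"
      using K by (meson mult_right_mono less_imp_le order_trans)
    then show "norm (\<phi> (R l)) \<le> norm (inverse l) * (2 * norm p * K)"
      by (simp add: norm_inverse divide_inverse mult_ac)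
  qed
  then have "((\<lambda>l. \<phi> (R l)) \<longlongrightarrow> 0) at_infinity"
    by (rule tendsto_0_le[OF tendsto_inverse_0])
  ultimately have "\<phi> (R 0) = 0" by (rule Liouville_weak_0)
  with \<phi>(3) show False ..
qed

lemma corner_left_inverse_is_inverse:
  fixes p :: "'a::ring"
  assumes p: "p * p = p" "p \<noteq> 0"
    and left_inv: "\<And>z. p * z * p = z \<Longrightarrow> z \<noteq> 0 \<Longrightarrow> \<exists>w. p * w * p = w \<and> w * z = p"
    and z: "p * z * p = z" "z \<noteq> 0"
  shows "\<exists>w. p * w * p = w \<and> w * z = p \<and> z * w = p"
proof -
  obtain w where w: "p * w * p = w" "w * z = p" using left_inv z by blast
  then have "w \<noteq> 0" using p(2) by auto
  then obtain u where u: "p * u * p = u" "u * w = p" using left_inv w(1) by blast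
  have "u = u * (w * z)" using u(1) p(1) w(2) by (metis mult.assoc)
  also have "\<dots> = z" using u(2) z(1) p(1) by (metis mult.assoc)
  finally show ?thesis using w u(2) by blast
qed

lemma corner_division_algebra_scalar:
  fixes p :: "'a::cbanach_algebra_1"
  assumes p: "p * p = p" "p \<noteq> 0"
    and left_inv: "\<And>z. p * z * p = z \<Longrightarrow> z \<noteq> 0 \<Longrightarrow> \<exists>w. p * w * p = w \<and> w * z = p"
    and z: "p * z * p = z"
  shows "\<exists>c. z = scaleC c p"
proof (rule ccontr)
  assume not_scalar: "\<nexists>c. z = scaleC c p"
  have "\<forall>l. \<exists>w. p * w * p = w \<and> w * (z - scaleC l p) = p \<and> (z - scaleC l p) * w = p"
  proof
    fix l
    have "p * (z - scaleC l p) * p = z - scaleC l p"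
      using p(1) z by (simp add: right_diff_distrib left_diff_distrib mult_scaleC_left mult_scaleC_right)
    moreover have "z - scaleC l p \<noteq> 0" using not_scalar by simp
    ultimately show "\<exists>w. p * w * p = w \<and> w * (z - scaleC l p) = p \<and> (z - scaleC l p) * w = p"
      using corner_left_inverse_is_inverse[OF p left_inv] by blast
  qed
  then obtain R where R: "\<And>l. p * R l * p = R l" "\<And>l. R l * (z - scaleC l p) = p"
      "\<And>l. (z - scaleC l p) * R l = p"
    by metis
  have "R l * p = R l" "p * R l = R l" for l
    using R(1) p(1) by (metis mult.assoc)+
  then show False using no_entire_resolvent[OF p(2) R(2,3)] by blast
qed

lemma minimal_left_ideal_corner_scalar:
  assumes m: "minimal_left_ideal (L::'a::cbanach_algebra_1 set)"
    and p: "p \<in> L" "p * p = p" "p \<noteq> 0" and z: "p * z * p = z"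
  shows "\<exists>c. z = scaleC c p"
proof (rule corner_division_algebra_scalar[OF p(2,3) _ z])
  fix w assume w: "p * w * p = w" "w \<noteq> 0"
  have "w \<in> L"
    using m p(1) w(1) left_idealD[of L p "p * w"] by (simp add: minimal_left_ideal_def)
  then obtain b where b: "p = b * w"
    using minimal_left_ideal_principal[OF m _ w(2)] p(1) by blast
  have "p * w = w" using w(1) p(2) by (metis mult.assoc)
  then have "(p * b * p) * w = p" using b p(2) by (simp add: mult.assoc)
  moreover have "p * (p * b * p) * p = p * b * p" using p(2) by (metis mult.assoc)
  ultimately show "\<exists>w'. p * w' * p = w' \<and> w' * w = p" by blast
qed

text \<open>Every nonzero \<open>y \<in> p A p'\<close> generates \<open>L'\<close>, so \<open>p' = c\<^sub>0 y\<close>, and then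
  \<open>z = z p' = (p z c\<^sub>0 p) y\<close> for every \<open>z \<in> p A p'\<close>, with \<open>p z c\<^sub>0 p \<in> \<complex> p\<close>.\<close>

lemma minimal_left_ideals_corner_collinear:
  assumes L: "minimal_left_ideal (L::'a::cbanach_algebra_1 set)" "p \<in> L" "p * p = p" "p \<noteq> 0"
    and L': "minimal_left_ideal L'" "p' \<in> L'" "p' * p' = p'"
  shows "\<exists>y. \<forall>z. p * z * p' = z \<longrightarrow> (\<exists>c. z = scaleC c y)"
proof (cases "\<forall>a. p * a * p' = 0")
  case True
  then show ?thesis by (metis scaleC_zero_right)
next
  case False
  then obtain a where "p * a * p' \<noteq> 0" by blast
  define y where "y = p * a * p'"
  have "y \<in> L'" unfolding y_def using L'(1,2) by (simp add: minimal_left_ideal_def left_idealD)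
  then obtain c0 where c0: "p' = c0 * y"
    using minimal_left_ideal_principal[OF L'(1)] L'(2) \<open>p * a * p' \<noteq> 0\<close> unfolding y_def by blast
  have py: "p * y = y" unfolding y_def using L(3) by (simp add: mult.assoc[symmetric])
  have "\<exists>c. z = scaleC c y" if z: "p * z * p' = z" for z
  proof -
    have pz: "p * (z * x) = z * x" for x using z L(3) by (metis mult.assoc)
    have "z = z * p'" using z L'(3) by (metis mult.assoc)
    also have "\<dots> = (p * (z * c0) * p) * y" using c0 py pz by (simp add: mult.assoc)
    finally have zy: "z = (p * (z * c0) * p) * y" .
    have "p * (p * (z * c0) * p) * p = p * (z * c0) * p" using L(3) by (metis mult.assoc)
    then obtain c where "p * (z * c0) * p = scaleC c p"
      using minimal_left_ideal_corner_scalar[OF L] by blast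
    then have "z = scaleC c y" using zy py by (simp add: mult_scaleC_left)
    then show ?thesis by blast
  qed
  then show ?thesis by blast
qed

lemma minimal_left_ideals_sandwich_collinear:
  assumes ss: "semisimple TYPE('a::cbanach_algebra_1)"
    and L: "minimal_left_ideal (L::'a set)" "t \<in> L" and L': "minimal_left_ideal L'" "t' \<in> L'"
  shows "\<exists>y. \<forall>a. \<exists>c. t * a * t' = scaleC c y"
proof -
  obtain p where p: "p \<in> L" "p * p = p" "p \<noteq> 0" "\<And>x. x \<in> L \<Longrightarrow> x * p = x"
    using minimal_left_ideal_idempotent[OF ss L(1)] by blast
  obtain p' where p': "p' \<in> L'" "p' * p' = p'" "\<And>x. x \<in> L' \<Longrightarrow> x * p' = x"
    using minimal_left_ideal_idempotent[OF ss L'(1)] by blast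
  obtain y where y: "\<And>z. p * z * p' = z \<Longrightarrow> \<exists>c. z = scaleC c y"
    using minimal_left_ideals_corner_collinear[OF L(1) p(1-3) L'(1) p'(1,2)] by blast
  have "\<exists>c. t * a * t' = scaleC c (t * y)" for a
  proof -
    have "p * (p * (a * t') * p') * p' = p * (a * t') * p'" using p(2) p'(2) by (metis mult.assoc)
    then obtain c where "p * (a * t') * p' = scaleC c y" using y by blast
    moreover have "t * a * t' = t * (p * (a * t') * p')"
      using p(4)[OF L(2)] p'(3)[OF L'(2)] by (metis mult.assoc)
    ultimately have "t * a * t' = scaleC c (t * y)" by (simp add: mult_scaleC_right)
    then show ?thesis by blast
  qed
  then show ?thesis by blast
qed

section \<open>A socle whose closure has an identity is finite dimensional\<close>

lemma left_invertible_one_minus: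
  fixes y :: "'a::{banach, real_normed_algebra_1}"
  assumes "norm y < 1"
  obtains v where "v * (1 - y) = 1"
proof -
  have "summable (\<lambda>n. norm y ^ n)" using assms by (simp add: summable_geometric)
  then have "summable (\<lambda>n. y ^ n)"
    using summable_comparison_test'[where N = 0] norm_power_ineq by blast
  then have sums: "(\<lambda>n. y ^ n) sums (\<Sum>n. y ^ n)" by (rule summable_sums)
  define v where "v = (\<Sum>n. y ^ n)"
  have "(\<lambda>n. y ^ Suc n) sums (v * y)"
    using sums_mult2[OF sums, of y] unfolding v_def by (simp only: power_Suc2)
  then have "(\<lambda>n. y ^ n) sums (v * y + y ^ 0)"
    by (rule iffD1[OF sums_Suc_iff])
  then have "v = v * y + y ^ 0"
    by (rule sums_unique2[OF sums[folded v_def]])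
  then have "v * (1 - y) = 1"
    by (simp only: power_0 right_diff_distrib mult.right_neutral) (metis add_diff_cancel_left')
  then show ?thesis by (rule that)
qed

lemma closure_socle_identity_in_socle:
  fixes e :: "'a::cbanach_algebra_1"
  assumes e: "e \<in> closure socle" "\<And>x. x \<in> closure socle \<Longrightarrow> e * x = x \<and> x * e = x"
  shows "e \<in> socle"
proof -
  obtain s where s: "s \<in> socle" "dist s e < 1"
    using e(1) closure_approachable[of e socle] zero_less_one by blast
  then obtain v where v: "v * (1 - (e - s)) = 1"
    using left_invertible_one_minus[of "e - s"] by (auto simp: dist_norm norm_minus_commute)
  have "(1 - (e - s)) * e = s"
    using e(2)[OF e(1)] e(2)[OF closure_subset[THEN subsetD, OF s(1)]] by (simp add: left_diff_distrib)
  then have "e = v * s" using v by (metis mult.assoc mult_1_left)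
  then show ?thesis using mult_socle_left[OF s(1)] by simp
qed

lemma cfinite_dim_socle_if_identity:
  assumes ss: "semisimple TYPE('a::cbanach_algebra_1)"
    and e: "e \<in> (socle::'a set)" "\<And>x. x \<in> (socle::'a set) \<Longrightarrow> e * x = x \<and> x * e = x"
  shows "cfinite_dim (socle::'a set)"
proof -
  obtain T c where T: "finite T" "T \<subseteq> \<Union>{L. minimal_left_ideal L}" "e = (\<Sum>t\<in>T. scaleC (c t) t)"
    using e(1) unfolding socle_def cspan_def by blast
  define Y :: "'a \<Rightarrow> 'a \<Rightarrow> 'a" where "Y t t' = (SOME y. \<forall>a. \<exists>d. t * a * t' = scaleC d y)" for t t'
  have Y: "\<exists>d. t * a * t' = scaleC d (Y t t')" if tT: "t \<in> T" "t' \<in> T" for t t' a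
  proof -
    obtain L L' where "minimal_left_ideal L" "t \<in> L" "minimal_left_ideal L'" "t' \<in> L'"
      using tT T(2) by blast
    from minimal_left_ideals_sandwich_collinear[OF ss this] show ?thesis
      unfolding Y_def by (rule someI_ex[THEN spec])
  qed
  define B where "B = (\<lambda>(t, t'). Y t t') ` (T \<times> T)"
  have "x \<in> cspan B" if x: "x \<in> socle" for x
  proof -
    have "x = e * x * e" using e(2)[OF x] by simp
    also have "\<dots> = (\<Sum>t'\<in>T. scaleC (c t') (\<Sum>t\<in>T. scaleC (c t) (t * x * t')))"
      unfolding T(3) by (simp add: sum_distrib_left sum_distrib_right mult_scaleC_left mult_scaleC_right
          mult.assoc)
    also have "\<dots> \<in> cspan B"
    proof (intro csubspace_sum csubspace_scaleC csubspace_cspan)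
      fix t t' assume "t \<in> T" "t' \<in> T"
      then obtain d where "t * x * t' = scaleC d (Y t t')" "Y t t' \<in> B"
        using Y unfolding B_def by force
      then show "t * x * t' \<in> cspan B" by (simp add: csubspace_scaleC[OF csubspace_cspan] cspan_base)
    qed
    finally show ?thesis .
  qed
  moreover have "finite B" unfolding B_def using T(1) by simp
  ultimately show ?thesis unfolding cfinite_dim_def by blast
qed

theorem proposition1p8:
  assumes "semisimple TYPE('a::cbanach_algebra_1)"
  shows "cfinite_dim (socle :: 'a set) \<longleftrightarrow> has_identity (closure (socle :: 'a set))"
proof
  assume "cfinite_dim (socle :: 'a set)"
  then show "has_identity (closure (socle :: 'a set))"
    by (rule has_identity_closure_socle[OF assms])
next
  assume "has_identity (closure (socle :: 'a set))"
  then obtain e :: 'a where "e \<in> closure socle" "\<And>x. x \<in> closure socle \<Longrightarrow> e * x = x \<and> x * e = x"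
    unfolding has_identity_def by blast
  then show "cfinite_dim (socle :: 'a set)"
    using cfinite_dim_socle_if_identity[OF assms] closure_socle_identity_in_socle closure_subset by blast
qed

end
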